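(* There exist constants $\varepsilon_0>0$ and $C>0$ with the following property. Let $r>0$, $\delta>0$, $R:=r/\delta$ and $\varepsilon:=R+\tfrac12-\lfloor R+\tfrac12\rfloor$. If $\varepsilon\in[0,\varepsilon_0]$ and $R$ is sufficiently large, then for every unit-norm tight frame $\mathcal{F}$ of $\mathbb{R}^2$, $$\mathcal{E}_\delta(r,\mathcal{F})\ge C\,\frac{\delta^{3/2}}{\sqrt r}.$$
   Context: A finite family $\mathcal{F}=\{e_j\}_{j=1}^N\subset\mathbb{R}^2$ is a unit-norm tight frame if $\|e_j\|=1$ for all $j$ and $\sum_j e_je_j^T=\frac{N}{2}I_2$. For $\delta>0$, $Q_\delta(t):=\delta\lfloor t/\delta+1/2\rfloor$, and $E_\delta(x,\mathcal{F}):=\bigl\|x-\frac{2}{N}\sum_{j=1}^N Q_\delta(\langle x,e_j\rangle)e_j\bigr\|$ (Euclidean norm). For $r>0$ set $x_\psi:=r[\cos\psi,\sin\psi]^T$ and $$\mathcal{E}_\delta(r,\mathcal{F}):=\Bigl(\int_0^{2\pi}E_\delta(x_\psi,\mathcal{F})^2\,d\psi\Bigr)^{1/2}.$$ *)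

theory Defs
  imports "HOL-Analysis.Analysis"
begin

definition outer :: "real^2 \<Rightarrow> real^2^2" where
  "outer v = (\<chi> i k. v $ i * v $ k)"

definition unit_norm_tight_frame :: "nat \<Rightarrow> (nat \<Rightarrow> real^2) \<Rightarrow> bool" where
  "unit_norm_tight_frame N e \<longleftrightarrow>
     N \<ge> 1 \<and> (\<forall>j\<in>{1..N}. norm (e j) = 1) \<and>
     (\<Sum>j\<in>{1..N}. outer (e j)) = (real N / 2) *\<^sub>R mat 1"

definition Qd :: "real \<Rightarrow> real \<Rightarrow> real" where
  "Qd \<delta> t = \<delta> * real_of_int \<lfloor>t / \<delta> + 1/2\<rfloor>"

definition Err :: "real \<Rightarrow> real^2 \<Rightarrow> nat \<Rightarrow> (nat \<Rightarrow> real^2) \<Rightarrow> real" where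
  "Err \<delta> x N e = norm (x - (2 / real N) *\<^sub>R (\<Sum>j\<in>{1..N}. Qd \<delta> (x \<bullet> e j) *\<^sub>R e j))"

definition xpsi :: "real \<Rightarrow> real \<Rightarrow> real^2" where
  "xpsi r \<psi> = r *\<^sub>R vector [cos \<psi>, sin \<psi>]"

definition MSE :: "real \<Rightarrow> real \<Rightarrow> nat \<Rightarrow> (nat \<Rightarrow> real^2) \<Rightarrow> real" where
  "MSE \<delta> r N e = sqrt (integral {0..2*pi} (\<lambda>\<psi>. (Err \<delta> (xpsi r \<psi>) N e)^2))"

end

theory Submission
  imports Defs
begin

text \<open>
  Write R = r/\<delta>.  By the tight-frame reconstruction formula the error vector
  is (2/N) \<Sum> (t_j - Q(t_j)) e_j with t_j = <x, e_j>.  Projecting it onto x/|x|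
  (Cauchy-Schwarz) bounds the error below by |F(\<psi>)|, where F is the frame
  average of the 2\<pi>-periodic function g(\<phi>) = (r cos \<phi> - Q(r cos \<phi>)) cos \<phi>
  shifted by the frame angles.  Expanding the rounding of R cos \<phi> as a count
  of half-integers, \<integral> g = \<delta>(\<pi>R - 4S), where S, the sum over k of
  \<surd>(1 - ((k-1/2)/R)^2), is a midpoint sum for the area \<pi>R/4 of a quarter
  disc.  When R + 1/2 lies just above an integer, concavity (trapezoid rule)
  and the \<surd>-behaviour of the circle near its edge show that the deficit
  \<pi>R - 4S is at least 2/(5\<surd>R).  Finally
  \<integral> Err^2 \<ge> \<integral> F^2 \<ge> (\<integral> F)^2 / 2\<pi>, which gives the bound with
  \<epsilon>0 = 1/200, C = 1/4 and R \<ge> 100.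
\<close>

section \<open>Tight frames and the rounding error\<close>

lemma inner_real2: "(x::real^2) \<bullet> y = x$1 * y$1 + x$2 * y$2"
  by (simp add: inner_vec_def sum_2)

lemma tight_frame_gram:
  assumes "unit_norm_tight_frame N e"
  shows "(\<Sum>j\<in>{1..N}. e j $ i * e j $ k) = (if i = k then real N / 2 else 0)"
proof -
  have "(\<Sum>j\<in>{1..N}. outer (e j)) $ i $ k = ((real N / 2) *\<^sub>R mat 1 :: real^2^2) $ i $ k"
    using assms unfolding unit_norm_tight_frame_def by simp
  then show ?thesis by (cases "i = k") (simp_all add: outer_def mat_def)
qed

lemma tight_frame_reconstruction:
  assumes "unit_norm_tight_frame N e"
  shows "(\<Sum>j\<in>{1..N}. (x \<bullet> e j) *\<^sub>R e j) = (real N / 2) *\<^sub>R x"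
proof (subst vec_eq_iff, rule allI)
  fix i :: 2
  have "(\<Sum>j\<in>{1..N}. (x \<bullet> e j) *\<^sub>R e j) $ i
      = (\<Sum>j\<in>{1..N}. (x$1 * e j$1 + x$2 * e j$2) * e j $ i)"
    by (simp add: inner_real2)
  also have "\<dots> = x$1 * (\<Sum>j\<in>{1..N}. e j$1 * e j $ i) + x$2 * (\<Sum>j\<in>{1..N}. e j$2 * e j $ i)"
    by (simp add: sum.distrib sum_distrib_left algebra_simps)
  also have "\<dots> = ((real N / 2) *\<^sub>R x) $ i"
    using tight_frame_gram[OF assms] exhaust_2[of i] by auto
  finally show "(\<Sum>j\<in>{1..N}. (x \<bullet> e j) *\<^sub>R e j) $ i = ((real N / 2) *\<^sub>R x) $ i" .
qed

lemma Qd_error_bound: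
  assumes "\<delta> > 0" shows "\<bar>t - Qd \<delta> t\<bar> \<le> \<delta>/2"
proof -
  have "\<bar>t/\<delta> - real_of_int \<lfloor>t/\<delta> + 1/2\<rfloor>\<bar> \<le> 1/2"
    using of_int_floor_le[of "t/\<delta> + 1/2"] real_of_int_floor_add_one_gt[of "t/\<delta> + 1/2"]
    by linarith
  then have "\<bar>\<delta> * (t/\<delta> - real_of_int \<lfloor>t/\<delta> + 1/2\<rfloor>)\<bar> \<le> \<delta> * (1/2)"
    using assms by (simp add: abs_mult)
  moreover have "\<delta> * (t/\<delta> - real_of_int \<lfloor>t/\<delta> + 1/2\<rfloor>) = t - Qd \<delta> t"
    using assms by (simp add: Qd_def right_diff_distrib)
  ultimately show ?thesis by simp
qed

lemma Err_tight_frame: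
  assumes fr: "unit_norm_tight_frame N e"
  shows "Err \<delta> x N e =
    norm ((2 / real N) *\<^sub>R (\<Sum>j\<in>{1..N}. (x \<bullet> e j - Qd \<delta> (x \<bullet> e j)) *\<^sub>R e j))"
proof -
  have N: "N \<ge> 1" using fr by (simp add: unit_norm_tight_frame_def)
  have "x = (2 / real N) *\<^sub>R (\<Sum>j\<in>{1..N}. (x \<bullet> e j) *\<^sub>R e j)"
    using N by (simp add: tight_frame_reconstruction[OF fr] del: One_nat_def)
  then have "x - (2 / real N) *\<^sub>R (\<Sum>j\<in>{1..N}. Qd \<delta> (x \<bullet> e j) *\<^sub>R e j)
     = (2 / real N) *\<^sub>R (\<Sum>j\<in>{1..N}. (x \<bullet> e j) *\<^sub>R e j)
       - (2 / real N) *\<^sub>R (\<Sum>j\<in>{1..N}. Qd \<delta> (x \<bullet> e j) *\<^sub>R e j)"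
    by simp
  also have "\<dots> = (2 / real N) *\<^sub>R (\<Sum>j\<in>{1..N}. (x \<bullet> e j - Qd \<delta> (x \<bullet> e j)) *\<^sub>R e j)"
    by (simp add: scaleR_diff_right[symmetric] sum_subtractf[symmetric] scaleR_diff_left)
  finally show ?thesis by (simp add: Err_def)
qed

text \<open>The crude bound Err \<le> \<delta>; it is only needed for integrability.\<close>
lemma Err_le_delta:
  assumes fr: "unit_norm_tight_frame N e" and d: "\<delta> > 0"
  shows "Err \<delta> x N e \<le> \<delta>"
proof -
  have N: "N \<ge> 1" and unit: "\<And>j. j \<in> {1..N} \<Longrightarrow> norm (e j) = 1"
    using fr by (auto simp: unit_norm_tight_frame_def)
  have "norm (\<Sum>j\<in>{1..N}. (x \<bullet> e j - Qd \<delta> (x \<bullet> e j)) *\<^sub>R e j)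
      \<le> (\<Sum>j\<in>{1..N}. norm ((x \<bullet> e j - Qd \<delta> (x \<bullet> e j)) *\<^sub>R e j))" by (rule norm_sum)
  also have "\<dots> \<le> (\<Sum>j\<in>{1..N}. \<delta>/2)"
    by (rule sum_mono) (use Qd_error_bound[OF d] unit in simp)
  finally have "norm (\<Sum>j\<in>{1..N}. (x \<bullet> e j - Qd \<delta> (x \<bullet> e j)) *\<^sub>R e j) \<le> real N * (\<delta>/2)"
    by simp
  then have "(2 / real N) * norm (\<Sum>j\<in>{1..N}. (x \<bullet> e j - Qd \<delta> (x \<bullet> e j)) *\<^sub>R e j)
      \<le> (2 / real N) * (real N * (\<delta>/2))" by (rule mult_left_mono) simp
  also have "\<dots> = \<delta>" using N by simp
  finally show ?thesis unfolding Err_tight_frame[OF fr] by simp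
qed

section \<open>The circle profile and its quadrature\<close>

text \<open>Height of the circle of radius R above the abscissa x, normalised by R.\<close>
definition arc_height :: "real \<Rightarrow> real \<Rightarrow> real" where
  "arc_height R x = sqrt (1 - (x/R)^2)"

lemma arc_height_sq: "R > 0 \<Longrightarrow> \<bar>x\<bar> \<le> R \<Longrightarrow> (arc_height R x)^2 = 1 - (x/R)^2"
proof -
  assume "R > 0" "\<bar>x\<bar> \<le> R"
  then have "\<bar>x/R\<bar> \<le> 1" by (simp add: divide_le_eq_1)
  then have "\<bar>x/R\<bar>^2 \<le> 1^2" by (intro power_mono) auto
  then have "0 \<le> 1 - (x/R)^2" by (simp only: power2_abs power_one diff_ge_0_iff_ge)
  then show ?thesis unfolding arc_height_def by (rule real_sqrt_pow2)
qed

lemma arc_height_nonneg: "R > 0 \<Longrightarrow> \<bar>x\<bar> \<le> R \<Longrightarrow> arc_height R x \<ge> 0"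
  using arc_height_sq[of R x] unfolding arc_height_def by simp

lemma arc_height_le_1: "arc_height R x \<le> 1"
  unfolding arc_height_def by simp

lemma arc_height_integrable: "R \<noteq> 0 \<Longrightarrow> arc_height R integrable_on {a..b}"
  unfolding arc_height_def by (intro integrable_continuous_interval continuous_intros) auto

lemma convex_combination_in_unit_disc:
  fixes p1 p2 q1 q2 t :: real
  assumes "p1^2 + p2^2 = 1" "q1^2 + q2^2 = 1" "0 \<le> t" "t \<le> 1"
  shows "((1-t)*p1+t*q1)^2 + ((1-t)*p2+t*q2)^2 \<le> 1"
proof -
  have "0 \<le> (p1-q1)^2 + (p2-q2)^2" by simp
  also have "\<dots> = (p1^2+p2^2) + (q1^2+q2^2) - 2*(p1*q1+p2*q2)"
    by (simp add: power2_eq_square algebra_simps)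
  finally have pq: "p1*q1+p2*q2 \<le> 1" using assms by simp
  have "2*(t*(1-t))*(p1*q1+p2*q2) \<le> 2*(t*(1-t))*1"
    by (rule mult_left_mono) (use assms pq in auto)
  moreover have "((1-t)*p1+t*q1)^2 + ((1-t)*p2+t*q2)^2
     = (1-t)^2*(p1^2+p2^2) + t^2*(q1^2+q2^2) + 2*(t*(1-t))*(p1*q1+p2*q2)"
    by (simp add: power2_eq_square algebra_simps)
  moreover have "(1-t)^2 + t^2 + 2*(t*(1-t))*1 = (1::real)"
    by (simp add: power2_eq_square algebra_simps)
  ultimately show ?thesis using assms by simp
qed

lemma arc_height_above_chord:
  assumes R: "R > 0" and "0 \<le> a" "a \<le> x" "x \<le> b" "b \<le> R" "a < b"
  shows "arc_height R a + (arc_height R b - arc_height R a)*(x-a)/(b-a) \<le> arc_height R x"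
proof -
  define t where "t = (x-a)/(b-a)"
  have t: "0 \<le> t" "t \<le> 1" using assms by (auto simp: t_def divide_le_eq_1)
  have "t*(b-a) = x - a" using assms by (simp add: t_def)
  then have "x = (1-t)*a + t*b" by (simp add: algebra_simps)
  then have xt: "x/R = (1-t)*(a/R)+t*(b/R)" by (simp add: add_divide_distrib)
  have "(arc_height R b - arc_height R a)*(x-a)/(b-a) = t*(arc_height R b - arc_height R a)"
    by (simp add: t_def)
  then have chord: "arc_height R a + (arc_height R b - arc_height R a)*(x-a)/(b-a)
      = (1-t)*arc_height R a + t*arc_height R b"
    by (simp add: algebra_simps)
  have "((1-t)*(a/R)+t*(b/R))^2 + ((1-t)*arc_height R a+t*arc_height R b)^2 \<le> 1"
    by (rule convex_combination_in_unit_disc) (use assms arc_height_sq t in auto)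
  then have "((1-t)*arc_height R a+t*arc_height R b)^2 \<le> 1 - (x/R)^2"
    by (simp add: xt)
  then have "(1-t)*arc_height R a+t*arc_height R b \<le> arc_height R x"
    unfolding arc_height_def[of R x] by (rule real_le_rsqrt)
  then show ?thesis unfolding chord .
qed

lemma arc_height_trapezoid:
  assumes R: "R > 0" and "0 \<le> a" "a \<le> b" "b \<le> R"
  shows "(b-a)*(arc_height R a + arc_height R b)/2 \<le> integral {a..b} (arc_height R)"
proof (cases "a = b")
  case True then show ?thesis by simp
next
  case False
  then have ab: "a < b" using assms by simp
  let ?fa = "arc_height R a" and ?fb = "arc_height R b"
  define d where "d = b - a"
  have d0: "d > 0" using ab by (simp add: d_def)
  define L where "L x = ?fa * x + (?fb - ?fa)*((x-a)*(x-a))/(2*d)" for x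
  have "((\<lambda>x. ?fa + (?fb - ?fa)*(x-a)/d) has_integral (L b - L a)) {a..b}"
  proof (rule fundamental_theorem_of_calculus)
    fix x assume "x \<in> {a..b}"
    have "(L has_real_derivative ?fa + (?fb - ?fa)*(x-a)/d) (at x within {a..b})"
      unfolding L_def using d0 by (auto intro!: derivative_eq_intros simp: field_simps)
    then show "(L has_vector_derivative ?fa + (?fb - ?fa)*(x-a)/d) (at x within {a..b})"
      by (simp add: has_real_derivative_iff_has_vector_derivative)
  qed (use ab in simp)
  moreover have "L b - L a = (b-a)*(?fa + ?fb)/2"
    using d0 by (simp add: L_def field_simps d_def)
  ultimately have "((\<lambda>x. ?fa + (?fb - ?fa)*(x-a)/d) has_integral ((b-a)*(?fa + ?fb)/2)) {a..b}"
    by simp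
  then show ?thesis
    by (rule has_integral_le[OF _ integrable_integral[OF arc_height_integrable]])
       (use arc_height_above_chord[OF R] assms ab R in \<open>auto simp: d_def\<close>)
qed

lemma arc_height_integral_quarter:
  assumes R: "R > 0"
  shows "integral {0..R} (arc_height R) = pi * R / 4"
proof -
  define A where "A x = (x * arc_height R x + R * arcsin (x/R))/2" for x
  have "(arc_height R has_integral (A R - A 0)) {0..R}"
  proof (rule fundamental_theorem_of_calculus_interior)
    show "continuous_on {0..R} A" unfolding A_def arc_height_def
      using R by (intro continuous_intros) (auto simp: divide_le_eq_1 le_divide_eq)
    fix x assume x: "x \<in> {0<..<R}"
    then have x1: "\<bar>x/R\<bar> < 1" using R by (simp add: abs_less_iff field_simps)
    then have m1: "-1 < x/R" "x/R < 1" unfolding abs_less_iff by linarith+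
    have pos: "1 - (x/R)^2 > 0"
      using x1 by (metis abs_less_iff diff_gt_0_iff_gt less_1_mult abs_square_less_1)
    define s where "s = sqrt (1 - (x/R)^2)"
    have s0: "s > 0" and ss: "s^2 = 1 - (x/R)^2" using pos by (auto simp: s_def)
    have "inverse s * 2 - inverse s * x * x * 2 / (R * R) = 2 * (1 - (x/R)^2) / s"
      using s0 R by (simp add: field_simps power2_eq_square)
    also have "\<dots> = 2 * s^2 / s" by (simp only: ss)
    also have "\<dots> = 2 * s" using s0 by (simp add: power2_eq_square)
    finally have "(A has_real_derivative s) (at x)"
      unfolding A_def arc_height_def s_def[symmetric] using R m1 pos
      by (auto intro!: derivative_eq_intros simp: s_def[symmetric])
    then show "(A has_vector_derivative arc_height R x) (at x)"
      by (simp add: has_real_derivative_iff_has_vector_derivative arc_height_def s_def)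
  qed (use R in simp)
  moreover have "A R - A 0 = pi * R / 4"
    using R by (simp add: A_def arc_height_def)
  ultimately show ?thesis by (simp add: integral_unique)
qed

lemma arc_height_edge_upper:
  assumes R: "R > 0" and v: "0 \<le> v" "v \<le> R"
  shows "arc_height R (R - v) \<le> sqrt (2 * v / R)"
  unfolding arc_height_def
proof (rule real_sqrt_le_mono)
  have "1 - ((R-v)/R)^2 = (2 * v * R - v^2)/R^2" using R by (simp add: field_simps power2_eq_square)
  also have "\<dots> \<le> (2 * v * R)/R^2" using R by (intro divide_right_mono) auto
  also have "\<dots> = 2 * v / R" using R by (simp add: power2_eq_square)
  finally show "1 - ((R-v)/R)^2 \<le> 2 * v / R" .
qed

lemma arc_height_edge_lower:
  assumes R: "R \<ge> 1" and x: "R - 1 \<le> x" "x \<le> R"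
  shows "sqrt ((2*R-1)/R^2) * sqrt (R - x) \<le> arc_height R x"
  unfolding arc_height_def real_sqrt_mult[symmetric]
proof (rule real_sqrt_le_mono)
  have "(2*R-1)/R^2 * (R - x) = ((2*R-1)*(R-x))/R^2" by simp
  also have "\<dots> \<le> ((R+x)*(R-x))/R^2"
    using R x by (intro divide_right_mono mult_right_mono) auto
  also have "\<dots> = 1 - (x/R)^2" using R by (simp add: field_simps power2_eq_square)
  finally show "(2*R-1)/R^2 * (R - x) \<le> 1 - (x/R)^2" .
qed

lemma sqrt_edge_integral: "((\<lambda>x. sqrt (R - x)) has_integral (2/3)) {R-1..R}"
proof -
  define A where "A x = -(2/3) * ((R - x) * sqrt (R - x))" for x
  have "((\<lambda>x. sqrt (R - x)) has_integral (A R - A (R-1))) {R-1..R}"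
  proof (rule fundamental_theorem_of_calculus_interior)
    show "continuous_on {R-1..R} A" unfolding A_def by (intro continuous_intros)
    fix x assume "x \<in> {R-1<..<R}"
    then have p: "R - x > 0" by simp
    have "(A has_real_derivative
        (-(2/3)) * ((0-1) * sqrt (R-x) + (inverse (sqrt (R-x)) / 2 * (0-1)) * (R-x))) (at x)"
      unfolding A_def using p by (auto intro!: derivative_eq_intros)
    moreover have "inverse (sqrt (R - x)) * (R - x) = sqrt (R - x)"
      using p by (metis less_eq_real_def mult.commute real_div_sqrt divide_inverse)
    moreover have "\<And>s w t::real. (-(2/3)) * ((0-1) * s + (w / 2 * (0-1)) * t)
        = (2/3) * s + (1/3) * (w * t)" by (simp add: field_simps)
    ultimately have "(A has_real_derivative sqrt (R - x)) (at x)" by simp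
    then show "(A has_vector_derivative sqrt (R - x)) (at x)"
      by (simp add: has_real_derivative_iff_has_vector_derivative)
  qed simp
  moreover have "A R - A (R-1) = 2/3" by (simp add: A_def)
  ultimately show ?thesis by simp
qed

text \<open>Midpoint sums undershoot the integral (trapezoid rule applied between
  consecutive midpoints), up to half the last term.\<close>
lemma arc_height_midpoint_sum:
  assumes R: "R > 0"
  shows "m \<ge> 1 \<Longrightarrow> real m - 1/2 \<le> R \<Longrightarrow>
    (\<Sum>k=1..m. arc_height R (real k - 1/2))
      \<le> integral {0..real m - 1/2} (arc_height R) + arc_height R (real m - 1/2)/2"
proof (induction m)
  case 0 then show ?case by simp
next
  case (Suc m)
  show ?case
  proof (cases "m = 0")
    case True
    have "(1/2 - 0)*(arc_height R 0 + arc_height R (1/2))/2 \<le> integral {0..1/2} (arc_height R)"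
      using Suc.prems R by (intro arc_height_trapezoid) auto
    moreover have "arc_height R 0 = 1" by (simp add: arc_height_def)
    ultimately show ?thesis using True arc_height_le_1[of R "1/2"] by simp
  next
    case False
    let ?a = "real m - 1/2" and ?b = "real m + 1/2"
    have m1: "m \<ge> 1" using False by simp
    have IH: "(\<Sum>k=1..m. arc_height R (real k - 1/2))
        \<le> integral {0..?a} (arc_height R) + arc_height R ?a/2"
      using Suc.IH m1 Suc.prems by simp
    have trap: "(?b - ?a)*(arc_height R ?a + arc_height R ?b)/2 \<le> integral {?a..?b} (arc_height R)"
      using Suc.prems R m1 by (intro arc_height_trapezoid) auto
    have Rn: "R \<noteq> 0" using R by simp
    have split: "integral {0..?a} (arc_height R) + integral {?a..?b} (arc_height R)
        = integral {0..?b} (arc_height R)"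
      using Henstock_Kurzweil_Integration.integral_combine[where a=0 and c="?a" and b="?b"
          and f="arc_height R"]
        arc_height_integrable[OF Rn] m1 by auto
    have "(\<Sum>k=1..Suc m. arc_height R (real k - 1/2))
        = (\<Sum>k=1..m. arc_height R (real k - 1/2)) + arc_height R ?b"
      by (simp add: add_ac)
    also have "\<dots> \<le> integral {0..real (Suc m) - 1/2} (arc_height R) + arc_height R (real (Suc m) - 1/2)/2"
      using IH trap split by (simp add: algebra_simps)
    finally show ?thesis .
  qed
qed

lemma arc_height_integral_tail:
  assumes R: "R \<ge> 1" and a: "0 \<le> a" "a \<le> R - 1"
  shows "integral {0..a} (arc_height R) + sqrt ((2*R-1)/R^2) * (2/3) \<le> pi*R/4"
proof -
  have R0: "R > 0" and Rn: "R \<noteq> 0" using R by auto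
  have "integral {0..a} (arc_height R) + integral {a..R} (arc_height R) = integral {0..R} (arc_height R)"
    using Henstock_Kurzweil_Integration.integral_combine[where a=0 and c=a and b=R
        and f="arc_height R"] arc_height_integrable[OF Rn] a by auto
  moreover have "integral {a..R-1} (arc_height R) + integral {R-1..R} (arc_height R)
      = integral {a..R} (arc_height R)"
    using Henstock_Kurzweil_Integration.integral_combine[where a=a and c="R-1" and b=R
        and f="arc_height R"] arc_height_integrable[OF Rn] a by auto
  moreover have "integral {a..R-1} (arc_height R) \<ge> 0"
    by (rule integral_nonneg[OF arc_height_integrable[OF Rn]])
       (use a R in \<open>auto intro!: arc_height_nonneg\<close>)
  moreover have "integral {R-1..R} (arc_height R) \<ge> sqrt ((2*R-1)/R^2) * (2/3)"
    by (rule has_integral_le[OF has_integral_mult_right[OF sqrt_edge_integral]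
          integrable_integral[OF arc_height_integrable[OF Rn]]])
       (use R arc_height_edge_lower in auto)
  ultimately show ?thesis using arc_height_integral_quarter[OF R0] by linarith
qed

lemma numeric_bounds:
  assumes R: "R \<ge> 100" and e0: "0 \<le> eps" and e1: "eps \<le> 1/200"
  shows "sqrt (2*(1+eps)/R) \<le> 142/100 / sqrt R"
    and "sqrt (2*eps/R) \<le> 1/10 / sqrt R"
    and "sqrt ((2*R-1)/R^2) \<ge> 141/100 / sqrt R"
proof -
  have q: "sqrt R > 0" using R by simp
  have "sqrt (2*(1+eps)) \<le> sqrt ((142/100)^2)"
    using e1 by (intro real_sqrt_le_mono) (simp add: power2_eq_square)
  then have "sqrt (2*(1+eps)) / sqrt R \<le> 142/100 / sqrt R"
    using q by (intro divide_right_mono) auto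
  then show "sqrt (2*(1+eps)/R) \<le> 142/100 / sqrt R" by (simp add: real_sqrt_divide)
  have "sqrt (2*eps) \<le> sqrt ((1/10)^2)"
    using e1 by (intro real_sqrt_le_mono) (simp add: power2_eq_square)
  then have "sqrt (2*eps) / sqrt R \<le> 1/10 / sqrt R"
    using q by (intro divide_right_mono) auto
  then show "sqrt (2*eps/R) \<le> 1/10 / sqrt R" by (simp add: real_sqrt_divide)
  have "sqrt ((141/100)^2 * R) \<le> sqrt (2*R-1)"
    using R by (intro real_sqrt_le_mono) (simp add: power2_eq_square)
  then have "141/100 * sqrt R \<le> sqrt (2*R-1)" by (simp add: real_sqrt_mult)
  then have "141/100 * sqrt R / R \<le> sqrt (2*R-1) / R"
    using R by (intro divide_right_mono) auto
  moreover have "141/100 / sqrt R = 141/100 * sqrt R / R"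
  proof -
    have "R = sqrt R * sqrt R" using R by simp
    then show ?thesis using q by (metis divide_divide_eq_left nonzero_mult_div_cancel_right
          order_less_irrefl times_divide_eq_right)
  qed
  moreover have "sqrt ((2*R-1)/R^2) = sqrt (2*R-1) / R" using R by (simp add: real_sqrt_divide)
  ultimately show "sqrt ((2*R-1)/R^2) \<ge> 141/100 / sqrt R" by simp
qed

definition quarter_deficit :: "real \<Rightarrow> real" where
  "quarter_deficit R = pi * R - 4 * (\<Sum>k=1..nat \<lfloor>R + 1/2\<rfloor>. arc_height R (real k - 1/2))"

text \<open>Key lattice estimate: if R + 1/2 exceeds the integer n by at most 1/200,
  the last midpoint n - 1/2 sits within 1/200 of the edge, where the profile is
  tiny, while the missing strip [R-1,R] has area of order 1/\<surd>R.\<close>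
lemma quarter_deficit_lower:
  assumes R: "R \<ge> 100" and e0: "0 \<le> R + 1/2 - \<lfloor>R + 1/2\<rfloor>"
    and e1: "R + 1/2 - \<lfloor>R + 1/2\<rfloor> \<le> 1/200"
  shows "quarter_deficit R \<ge> 2/5 / sqrt R"
proof -
  define eps where "eps = R + 1/2 - \<lfloor>R + 1/2\<rfloor>"
  define n where "n = nat \<lfloor>R + 1/2\<rfloor>"
  have R0: "R > 0" using R by auto
  have eps: "0 \<le> eps" "eps \<le> 1/200" using e0 e1 by (auto simp: eps_def)
  have n: "real n = R + 1/2 - eps" using R by (simp add: n_def eps_def)
  then have "n \<ge> 2" using R eps by linarith
  then obtain m where nm: "n = Suc m" and m1: "m \<ge> 1" by (cases n) auto
  define a where "a = real m - 1/2"
  have a_eq: "a = R - (1 + eps)" using n nm by (simp add: a_def)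
  have last_term: "(\<Sum>k=1..n. arc_height R (real k - 1/2))
      = (\<Sum>k=1..m. arc_height R (real k - 1/2)) + arc_height R (R - eps)"
    using nm n by simp
  have sum: "(\<Sum>k=1..m. arc_height R (real k - 1/2))
      \<le> integral {0..a} (arc_height R) + arc_height R a/2"
    using arc_height_midpoint_sum[OF R0 m1] a_eq eps by (simp add: a_def)
  have tail: "integral {0..a} (arc_height R) + sqrt ((2*R-1)/R^2) * (2/3) \<le> pi*R/4"
    using a_eq eps R by (intro arc_height_integral_tail) auto
  have last1: "arc_height R a \<le> sqrt (2*(1+eps)/R)"
    unfolding a_eq using R eps by (intro arc_height_edge_upper) auto
  have last2: "arc_height R (R - eps) \<le> sqrt (2*eps/R)"
    using R eps by (intro arc_height_edge_upper) auto
  define w where "w = 1 / sqrt R"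
  have w0: "w \<ge> 0" using R by (simp add: w_def)
  have num: "sqrt (2*(1+eps)/R) \<le> 142/100 * w" "sqrt (2*eps/R) \<le> 1/10 * w"
      "sqrt ((2*R-1)/R^2) * (2/3) \<ge> 141/100 * w * (2/3)"
    using numeric_bounds[OF R eps] by (simp_all add: w_def)
  have "(\<Sum>k=1..n. arc_height R (real k - 1/2)) \<le> pi*R/4 - 1/10 * w"
    using last_term sum tail last1 last2 num w0 by linarith
  then show ?thesis unfolding quarter_deficit_def n_def[symmetric] w_def by simp
qed

section \<open>Averaging the rounding error over a circle\<close>

lemma count_le_sum:
  "(\<Sum>k=1..n. (if int k \<le> m then 1 else 0 :: real)) = of_int (max 0 (min (int n) m))"
  by (induction n) auto

lemma round_as_count:
  fixes y :: real
  assumes "- int n \<le> \<lfloor>y + 1/2\<rfloor>" "\<lfloor>y + 1/2\<rfloor> \<le> int n"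
  shows "real_of_int \<lfloor>y + 1/2\<rfloor> =
    (\<Sum>k=1..n. (if real k - 1/2 \<le> y then 1 else 0) - (if y < 1/2 - real k then 1 else 0))"
proof -
  define m where "m = \<lfloor>y + 1/2\<rfloor>"
  have above: "(real k - 1/2 \<le> y) \<longleftrightarrow> int k \<le> m" for k :: nat
    unfolding m_def by (subst le_floor_iff) auto
  have below: "(y < 1/2 - real k) \<longleftrightarrow> int k \<le> - m" for k :: nat
  proof -
    have "(y < 1/2 - real k) \<longleftrightarrow> m < 1 - int k"
      unfolding m_def by (subst floor_less_iff) auto
    then show ?thesis by auto
  qed
  have "(\<Sum>k=1..n. (if real k - 1/2 \<le> y then 1 else 0) - (if y < 1/2 - real k then 1 else 0))
     = (\<Sum>k=1..n. (if int k \<le> m then 1 else 0 :: real)) - (\<Sum>k=1..n. (if int k \<le> -m then 1 else 0 :: real))"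
    by (simp add: above below sum_subtractf)
  also have "\<dots> = of_int m" using assms unfolding count_le_sum m_def[symmetric] by auto
  finally show ?thesis by (simp add: m_def)
qed

lemma cos_has_integral: "(a::real) \<le> b \<Longrightarrow> (cos has_integral (sin b - sin a)) {a..b}"
  by (rule fundamental_theorem_of_calculus)
     (auto intro!: derivative_eq_intros simp: has_real_derivative_iff_has_vector_derivative[symmetric])

lemma cos_ge_iff:
  assumes "0 \<le> b" "b \<le> pi" "0 \<le> x" "x \<le> 2*pi"
  shows "cos b \<le> cos x \<longleftrightarrow> (x \<le> b \<or> 2*pi - b \<le> x)"
proof (cases "x \<le> pi")
  case True
  then show ?thesis using assms cos_mono_le_eq[of b x] by auto
next
  case False
  have "cos x = cos (2*pi - x)" by simp
  then show ?thesis using assms False cos_mono_le_eq[of b "2*pi - x"] by auto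
qed

lemma cos_above_level_integral:
  assumes c: "-1 \<le> c" "c \<le> 1"
  shows "((\<lambda>x. if c \<le> cos x then cos x else 0) has_integral (2 * sqrt (1 - c^2))) {0..2*pi}"
proof -
  define b where "b = arccos c"
  have b: "0 \<le> b" "b \<le> pi" using arccos_bounded[OF c] by (auto simp: b_def)
  have cb: "cos b = c" and sb: "sin b = sqrt (1 - c^2)"
    using c by (simp_all add: b_def sin_arccos)
  let ?f = "\<lambda>x. if c \<le> cos x then cos x else 0"
  have i1: "(?f has_integral sin b) {0..b}"
    by (rule has_integral_spike_finite[of "{}" _ _ cos])
       (use cos_has_integral[of 0 b] cos_ge_iff[OF b] cb b in auto)
  have i2: "(?f has_integral 0) {b..2*pi-b}"
    by (rule has_integral_spike_finite[of "{b, 2*pi-b}" _ _ "\<lambda>_. 0"])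
       (use cos_ge_iff[OF b] cb b in auto)
  have i3: "(?f has_integral sin b) {2*pi-b..2*pi}"
    by (rule has_integral_spike_finite[of "{}" _ _ cos])
       (use cos_has_integral[of "2*pi-b" "2*pi"] cos_ge_iff[OF b] cb b in auto)
  have i12: "(?f has_integral (sin b + 0)) {0..2*pi-b}"
    by (rule has_integral_combine[OF _ _ i1 i2]) (use b in auto)
  have "(?f has_integral (sin b + 0 + sin b)) {0..2*pi}"
    by (rule has_integral_combine[OF _ _ i12 i3]) (use b in auto)
  then show ?thesis using sb by simp
qed

lemma cos_sq_has_integral: "((\<lambda>x. cos x * cos x) has_integral pi) {0..2*pi}"
proof -
  have "((\<lambda>x. cos x * cos x) has_integral
      ((2*pi + sin (2*pi) * cos (2*pi))/2 - (0 + sin 0 * cos 0)/2)) {0..2*pi}"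
  proof (rule fundamental_theorem_of_calculus)
    fix x :: real assume "x \<in> {0..2*pi}"
    have "((\<lambda>x. (x + sin x * cos x)/2) has_real_derivative cos x * cos x) (at x within {0..2*pi})"
      by (auto intro!: derivative_eq_intros
          simp: algebra_simps power2_eq_square[symmetric] sin_squared_eq)
    then show "((\<lambda>x. (x + sin x * cos x)/2) has_vector_derivative cos x * cos x) (at x within {0..2*pi})"
      by (simp add: has_real_derivative_iff_has_vector_derivative)
  qed simp
  then show ?thesis by simp
qed

lemma rounding_residual_expansion:
  assumes R: "R > 0" and n: "n = nat \<lfloor>R + 1/2\<rfloor>"
  shows "(R * cos x - of_int \<lfloor>R * cos x + 1/2\<rfloor>) * cos x =
     R * (cos x * cos x) - (\<Sum>k=1..n. (if (real k - 1/2)/R \<le> cos x then cos x else 0)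
          - (cos x - (if - ((real k - 1/2)/R) \<le> cos x then cos x else 0)))"
proof -
  have "R * cos x \<ge> - R" "R * cos x \<le> R"
    using R mult_left_mono[OF cos_ge_minus_one[of x], of R] mult_left_le[OF cos_le_one[of x], of R]
    by auto
  then have bounds: "- int n \<le> \<lfloor>R * cos x + 1/2\<rfloor>" "\<lfloor>R * cos x + 1/2\<rfloor> \<le> int n"
    using R unfolding n by linarith+
  have above: "(real k - 1/2 \<le> R * cos x) \<longleftrightarrow> (real k - 1/2)/R \<le> cos x" for k
    using R by (simp add: pos_divide_le_eq mult.commute)
  have below: "(R * cos x < 1/2 - real k) \<longleftrightarrow> \<not> (- ((real k - 1/2)/R) \<le> cos x)" for k
    using R by (auto simp: field_simps)
  have "of_int \<lfloor>R * cos x + 1/2\<rfloor> * cos x = (\<Sum>k=1..n. (if (real k - 1/2)/R \<le> cos x then cos x else 0)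
          - (cos x - (if - ((real k - 1/2)/R) \<le> cos x then cos x else 0)))"
    unfolding round_as_count[OF bounds] sum_distrib_right
    by (intro sum.cong refl) (auto simp: above below left_diff_distrib)
  then show ?thesis by (simp add: algebra_simps)
qed

lemma rounding_residual_integral:
  assumes R: "R > 0"
  shows "((\<lambda>x. (R * cos x - of_int \<lfloor>R * cos x + 1/2\<rfloor>) * cos x) has_integral
           quarter_deficit R) {0..2*pi}"
proof -
  define n where "n = nat \<lfloor>R + 1/2\<rfloor>"
  define c where "c k = (real k - 1/2)/R" for k :: nat
  have "real n \<le> R + 1/2" using R unfolding n_def by linarith
  then have c01: "0 \<le> c k \<and> c k \<le> 1" if "k \<in> {1..n}" for k
    using that R by (auto simp: c_def field_simps)
  have levels: "((\<lambda>x. \<Sum>k=1..n. (if c k \<le> cos x then cos x else 0)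
          - (cos x - (if - c k \<le> cos x then cos x else 0))) has_integral
        (\<Sum>k=1..n. 2 * arc_height R (real k - 1/2) - (0 - 2 * arc_height R (real k - 1/2)))) {0..2*pi}"
  proof (rule has_integral_sum)
    fix k assume k: "k \<in> {1..n}"
    have "arc_height R (real k - 1/2) = sqrt (1 - (c k)^2)"
      and "arc_height R (real k - 1/2) = sqrt (1 - (- c k)^2)"
      by (simp_all add: arc_height_def c_def)
    then show "((\<lambda>x. (if c k \<le> cos x then cos x else 0)
          - (cos x - (if - c k \<le> cos x then cos x else 0))) has_integral
          2 * arc_height R (real k - 1/2) - (0 - 2 * arc_height R (real k - 1/2))) {0..2*pi}"
      using cos_above_level_integral[of "c k"] cos_above_level_integral[of "- c k"] c01[OF k]
        cos_has_integral[of 0 "2*pi"]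
      by (intro has_integral_diff) auto
  qed simp
  have "quarter_deficit R = R * pi - (\<Sum>k=1..n. 2 * arc_height R (real k - 1/2)
      - (0 - 2 * arc_height R (real k - 1/2)))"
    by (simp add: quarter_deficit_def n_def sum_distrib_left)
  then show ?thesis
    unfolding rounding_residual_expansion[OF R n_def] c_def[symmetric]
    using has_integral_diff[OF has_integral_mult_right[OF cos_sq_has_integral] levels] by simp
qed

section \<open>Projecting the error onto the signal direction\<close>

definition residual :: "real \<Rightarrow> real \<Rightarrow> real \<Rightarrow> real" where
  "residual r \<delta> \<phi> = (r * cos \<phi> - Qd \<delta> (r * cos \<phi>)) * cos \<phi>"

lemma residual_integral:
  assumes r: "r > 0" and d: "\<delta> > 0"
  shows "(residual r \<delta> has_integral \<delta> * quarter_deficit (r/\<delta>)) {0..2*pi}"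
proof -
  have "residual r \<delta> = (\<lambda>x. \<delta> * ((r/\<delta> * cos x - of_int \<lfloor>r/\<delta> * cos x + 1/2\<rfloor>) * cos x))"
    using d by (auto simp: residual_def Qd_def algebra_simps)
  moreover have "((\<lambda>x. \<delta> * ((r/\<delta> * cos x - of_int \<lfloor>r/\<delta> * cos x + 1/2\<rfloor>) * cos x))
      has_integral \<delta> * quarter_deficit (r/\<delta>)) {0..2*pi}"
    using r d by (intro has_integral_mult_right rounding_residual_integral) simp
  ultimately show ?thesis by simp
qed

lemma periodic_shift_has_integral:
  fixes g :: "real \<Rightarrow> real"
  assumes per: "\<And>x. g (x + p) = g x" and G: "(g has_integral G) {0..p}"
    and th: "0 \<le> \<theta>" "\<theta> \<le> p"
  shows "((\<lambda>\<psi>. g (\<psi> - \<theta>)) has_integral G) {0..p}"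
proof -
  have gi: "g integrable_on {0..p}" using G by blast
  define G1 where "G1 = integral {0..p-\<theta>} g"
  define G2 where "G2 = integral {p-\<theta>..p} g"
  have GG: "G1 + G2 = G"
    unfolding G1_def G2_def using Henstock_Kurzweil_Integration.integral_combine[OF _ _ gi, of "p-\<theta>"] th G
    by (auto simp: integral_unique)
  have "(g has_integral G1) {0..p-\<theta>}" "(g has_integral G2) {p-\<theta>..p}"
    unfolding G1_def G2_def using th
    by (auto intro!: integrable_integral integrable_subinterval_real[OF gi])
  from has_integral_shift_real_ivl[OF this(1), of "-\<theta>"] has_integral_shift_real_ivl[OF this(2), of "p-\<theta>"]
  have "((\<lambda>\<psi>. g (\<psi> - \<theta>)) has_integral G1) {\<theta>..p}" "((\<lambda>\<psi>. g (\<psi> - \<theta>)) has_integral G2) {0..\<theta>}"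
    using per[of "x - \<theta>" for x] by (simp_all add: algebra_simps)
  from has_integral_combine[OF _ _ this(2,1)] th GG show ?thesis by (simp add: add.commute)
qed

lemma frame_angles:
  assumes fr: "unit_norm_tight_frame N e"
  obtains \<theta> where "\<forall>j\<in>{1..N}. 0 \<le> \<theta> j \<and> \<theta> j \<le> 2*pi \<and> e j $ 1 = cos (\<theta> j) \<and> e j $ 2 = sin (\<theta> j)"
proof -
  have "\<exists>t. 0 \<le> t \<and> t \<le> 2*pi \<and> e j $ 1 = cos t \<and> e j $ 2 = sin t" if j: "j \<in> {1..N}" for j
  proof -
    have "norm (e j) = 1" using fr j by (simp add: unit_norm_tight_frame_def)
    then have "(e j $ 1)^2 + (e j $ 2)^2 = 1"
      by (metis inner_real2 norm_eq_1 power2_eq_square)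
    from sincos_total_2pi[OF this] show ?thesis by (metis less_eq_real_def)
  qed
  then show ?thesis using that by metis
qed

lemma inner_xpsi:
  assumes "v $ 1 = cos t" "v $ 2 = sin t"
  shows "xpsi r \<psi> \<bullet> v = r * cos (\<psi> - t)"
  using assms by (simp add: inner_real2 xpsi_def cos_diff algebra_simps)

lemma norm_xpsi:
  assumes "r \<ge> 0" shows "norm (xpsi r \<psi>) = r"
proof -
  have "xpsi r \<psi> \<bullet> xpsi r \<psi> = (r * cos \<psi>)^2 + (r * sin \<psi>)^2"
    by (simp add: inner_real2 xpsi_def power2_eq_square)
  also have "\<dots> = r^2 * ((cos \<psi>)^2 + (sin \<psi>)^2)" by (simp only: power_mult_distrib distrib_left)
  finally show ?thesis using assms by (simp add: norm_eq_sqrt_inner)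
qed

text \<open>Projection bound: the component of the error along x = xpsi r \<psi> is the
  frame average of shifted residuals, and it is at most the full error.\<close>
lemma Err_ge_projection:
  assumes fr: "unit_norm_tight_frame N e" and r: "r > 0"
    and th: "\<forall>j\<in>{1..N}. e j $ 1 = cos (\<theta> j) \<and> e j $ 2 = sin (\<theta> j)"
  shows "\<bar>(2 / real N) * (\<Sum>j\<in>{1..N}. residual r \<delta> (\<psi> - \<theta> j))\<bar> \<le> Err \<delta> (xpsi r \<psi>) N e"
proof -
  define x where "x = xpsi r \<psi>"
  define v where "v = (2 / real N) *\<^sub>R (\<Sum>j\<in>{1..N}. (x \<bullet> e j - Qd \<delta> (x \<bullet> e j)) *\<^sub>R e j)"
  have coeff: "(x \<bullet> e j - Qd \<delta> (x \<bullet> e j)) * (x \<bullet> e j) = r * residual r \<delta> (\<psi> - \<theta> j)"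
    if "j \<in> {1..N}" for j
    using th that inner_xpsi[of "e j" "\<theta> j" r \<psi>] by (simp add: x_def residual_def)
  have "v \<bullet> x = (2 / real N) * (\<Sum>j\<in>{1..N}. (x \<bullet> e j - Qd \<delta> (x \<bullet> e j)) * (x \<bullet> e j))"
    unfolding v_def by (simp add: inner_sum_left inner_sum_right inner_commute)
  also have "\<dots> = (2 / real N) * (\<Sum>j\<in>{1..N}. r * residual r \<delta> (\<psi> - \<theta> j))"
    by (simp add: coeff)
  also have "\<dots> = r * ((2 / real N) * (\<Sum>j\<in>{1..N}. residual r \<delta> (\<psi> - \<theta> j)))"
    by (simp add: sum_distrib_left[symmetric])
  finally have "r * \<bar>(2 / real N) * (\<Sum>j\<in>{1..N}. residual r \<delta> (\<psi> - \<theta> j))\<bar> \<le> norm v * norm x"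
    using r Cauchy_Schwarz_ineq2[of v x] by (simp add: abs_mult)
  also have "norm v * norm x = r * Err \<delta> x N e"
    using r by (simp add: v_def Err_tight_frame[OF fr] norm_xpsi x_def)
  finally show ?thesis unfolding x_def by (rule mult_left_le_imp_le[OF _ r])
qed

section \<open>Integrability and the mean-square inequality\<close>

lemma bounded_measurable_integrable:
  fixes f :: "real \<Rightarrow> real"
  assumes m: "f \<in> borel_measurable borel" and b: "\<And>x. \<bar>f x\<bar> \<le> B"
  shows "f integrable_on {a..b}"
proof (rule measurable_bounded_by_integrable_imp_integrable_real[where g="\<lambda>_. B"])
  show "f \<in> borel_measurable (lebesgue_on {a..b})"
    using m by (simp add: measurable_completion measurable_restrict_space1)
qed (use b in auto)

lemma xpsi_measurable: "xpsi r \<in> borel_measurable borel"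
proof -
  have "xpsi r = (\<lambda>\<psi>. (r * cos \<psi>) *\<^sub>R axis 1 1 + (r * sin \<psi>) *\<^sub>R axis 2 1)"
    unfolding xpsi_def by (simp add: vec_eq_iff forall_2 axis_def fun_eq_iff)
  then have "continuous_on UNIV (xpsi r)" by (simp add: continuous_intros)
  then show ?thesis by (rule borel_measurable_continuous_onI)
qed

lemma mean_square_ge:
  fixes F :: "real \<Rightarrow> real"
  assumes F: "(F has_integral I) {0..2*pi}" and F2: "(\<lambda>x. (F x)^2) integrable_on {0..2*pi}"
  shows "integral {0..2*pi} (\<lambda>x. (F x)^2) \<ge> I^2 / (2*pi)"
proof -
  define a where "a = I / (2*pi)"
  define J where "J = integral {0..2*pi} (\<lambda>x. (F x)^2)"
  have J: "((\<lambda>x. (F x)^2) has_integral J) {0..2*pi}" unfolding J_def using F2 by blast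
  have c: "((\<lambda>x. a^2) has_integral (2*pi*a^2)) {0..2*pi}"
    using has_integral_const_real[of "a^2" 0 "2*pi"] by simp
  have "((\<lambda>x. (F x)^2 - 2*a*F x + a^2) has_integral (J - 2*a*I + 2*pi*a^2)) {0..2*pi}"
    by (intro has_integral_add has_integral_diff J c has_integral_mult_right F)
  moreover have "(F x)^2 - 2*a*F x + a^2 = (F x - a)^2" for x
    by (simp add: power2_eq_square algebra_simps)
  ultimately have "((\<lambda>x. (F x - a)^2) has_integral (J - 2*a*I + 2*pi*a^2)) {0..2*pi}" by simp
  then have "0 \<le> J - 2*a*I + 2*pi*a^2" by (rule has_integral_nonneg) auto
  moreover have "2*a*I - 2*pi*a^2 = I^2/(2*pi)" by (simp add: a_def power2_eq_square field_simps)
  ultimately show ?thesis unfolding J_def[symmetric] by linarith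
qed

text \<open>For every tight frame, the squared error integrated over the circle is
  at least 2G^2/\<pi>, with G = \<delta> quarter_deficit (r/\<delta>) the integral of the
  residual: the projection F integrates to 2G over every period.\<close>
lemma integrated_sq_error_ge:
  assumes fr: "unit_norm_tight_frame N e" and r: "r > 0" and d: "\<delta> > 0"
  shows "integral {0..2*pi} (\<lambda>\<psi>. (Err \<delta> (xpsi r \<psi>) N e)^2)
           \<ge> 2 * (\<delta> * quarter_deficit (r/\<delta>))^2 / pi"
proof -
  define G where "G = \<delta> * quarter_deficit (r/\<delta>)"
  obtain \<theta> where th: "\<forall>j\<in>{1..N}. 0 \<le> \<theta> j \<and> \<theta> j \<le> 2*pi \<and> e j $ 1 = cos (\<theta> j) \<and> e j $ 2 = sin (\<theta> j)"
    using frame_angles[OF fr] by blast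
  have N1: "N \<ge> 1" using fr by (simp add: unit_norm_tight_frame_def)
  define F where "F \<psi> = (2 / real N) * (\<Sum>j\<in>{1..N}. residual r \<delta> (\<psi> - \<theta> j))" for \<psi>
  have "(F has_integral ((2 / real N) * (\<Sum>j\<in>{1..N}. G))) {0..2*pi}"
    unfolding F_def G_def
    using th periodic_shift_has_integral[OF _ residual_integral[OF r d]]
    by (intro has_integral_mult_right has_integral_sum) (auto simp: residual_def)
  then have F_int: "(F has_integral (2*G)) {0..2*pi}" using N1 by simp
  have F_abs: "\<bar>F \<psi>\<bar> \<le> Err \<delta> (xpsi r \<psi>) N e" for \<psi>
    unfolding F_def using Err_ge_projection[OF fr r] th by auto
  have F_le: "(F \<psi>)^2 \<le> (Err \<delta> (xpsi r \<psi>) N e)^2" for \<psi>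
    using power_mono[OF F_abs[of \<psi>], of 2] by simp
  have Err_sq_le: "(Err \<delta> (xpsi r \<psi>) N e)^2 \<le> \<delta>^2" for \<psi>
    using power_mono[OF Err_le_delta[OF fr d, of "xpsi r \<psi>"]
        order_trans[OF abs_ge_zero F_abs[of \<psi>]], where n=2] .
  have F_meas: "(\<lambda>\<psi>. (F \<psi>)^2) \<in> borel_measurable borel"
    unfolding F_def residual_def Qd_def by measurable
  have Err_meas: "(\<lambda>\<psi>. (Err \<delta> (xpsi r \<psi>) N e)^2) \<in> borel_measurable borel"
    unfolding Err_def Qd_def using xpsi_measurable[of r] by measurable
  have F2_int: "(\<lambda>\<psi>. (F \<psi>)^2) integrable_on {0..2*pi}"
    by (rule bounded_measurable_integrable[OF F_meas, of "\<delta>^2"])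
       (use F_le Err_sq_le in \<open>auto intro: order_trans\<close>)
  have Err2_int: "(\<lambda>\<psi>. (Err \<delta> (xpsi r \<psi>) N e)^2) integrable_on {0..2*pi}"
    by (rule bounded_measurable_integrable[OF Err_meas, of "\<delta>^2"]) (use Err_sq_le in auto)
  have "(2*G)^2 / (2*pi) \<le> integral {0..2*pi} (\<lambda>\<psi>. (F \<psi>)^2)"
    by (rule mean_square_ge[OF F_int F2_int])
  also have "\<dots> \<le> integral {0..2*pi} (\<lambda>\<psi>. (Err \<delta> (xpsi r \<psi>) N e)^2)"
    by (rule integral_le[OF F2_int Err2_int F_le])
  finally have "(2*G)^2 / (2*pi) \<le> integral {0..2*pi} (\<lambda>\<psi>. (Err \<delta> (xpsi r \<psi>) N e)^2)" .
  moreover have "(2*G)^2 / (2*pi) = 2 * G^2 / pi" by (simp add: power2_eq_square)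
  ultimately show ?thesis unfolding G_def[symmetric] by simp
qed

lemma powr_three_halves: "\<delta> > 0 \<Longrightarrow> \<delta> powr (3/2) = sqrt (\<delta>^3)"
proof -
  assume d: "\<delta> > 0"
  have "\<delta> powr (3/2) = (\<delta> powr 3) powr (1/2)" by (simp add: powr_powr)
  also have "\<dots> = sqrt (\<delta>^3)" using d by (simp add: powr_half_sqrt powr_realpow)
  finally show ?thesis .
qed

lemma main_bound:
  assumes r: "r > 0" and d: "\<delta> > 0" and R: "r/\<delta> \<ge> 100"
    and e0: "0 \<le> r/\<delta> + 1/2 - real_of_int \<lfloor>r/\<delta> + 1/2\<rfloor>"
    and e1: "r/\<delta> + 1/2 - real_of_int \<lfloor>r/\<delta> + 1/2\<rfloor> \<le> 1/200"
    and fr: "unit_norm_tight_frame N e"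
  shows "MSE \<delta> r N e \<ge> 1/4 * \<delta> powr (3/2) / sqrt r"
proof -
  define G0 where "G0 = \<delta> * (2/5 / sqrt (r/\<delta>))"
  have G0: "0 \<le> G0" using d R by (simp add: G0_def)
  have "G0 \<le> \<delta> * quarter_deficit (r/\<delta>)"
    unfolding G0_def by (rule mult_left_mono[OF quarter_deficit_lower[OF R e0 e1]]) (use d in simp)
  then have "G0^2 \<le> (\<delta> * quarter_deficit (r/\<delta>))^2" using G0 by (rule power_mono)
  then have "2 * G0^2 / 4 \<le> 2 * (\<delta> * quarter_deficit (r/\<delta>))^2 / pi"
    using pi_less_4 by (intro frac_le) auto
  also have "\<dots> \<le> integral {0..2*pi} (\<lambda>\<psi>. (Err \<delta> (xpsi r \<psi>) N e)^2)"
    by (rule integrated_sq_error_ge[OF fr r d])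
  finally have lower: "2 * G0^2 / 4 \<le> integral {0..2*pi} (\<lambda>\<psi>. (Err \<delta> (xpsi r \<psi>) N e)^2)" .
  define X where "X = \<delta>^3 / r"
  have "(sqrt (r/\<delta>))^2 = r/\<delta>" using d r by simp
  then have "G0^2 = \<delta>^2 * (4/25) / (r/\<delta>)"
    by (simp add: G0_def power_mult_distrib power_divide)
  also have "\<dots> = X * (4/25)" using d by (simp add: X_def power2_eq_square power3_eq_cube)
  finally have "2 * G0^2 / 4 = X * (2/25)" by simp
  moreover have "\<delta>^3 / (16 * r) = X / 16" by (simp add: X_def)
  moreover have "X \<ge> 0" using d r by (simp add: X_def)
  ultimately have "\<delta>^3 / (16 * r) \<le> integral {0..2*pi} (\<lambda>\<psi>. (Err \<delta> (xpsi r \<psi>) N e)^2)"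
    using lower by linarith
  then have "sqrt (\<delta>^3 / (16 * r)) \<le> MSE \<delta> r N e"
    unfolding MSE_def by (rule real_sqrt_le_mono)
  moreover have "1/4 * \<delta> powr (3/2) / sqrt r = sqrt (\<delta>^3 / (16 * r))"
    using d r by (simp add: powr_three_halves real_sqrt_divide real_sqrt_mult)
  ultimately show ?thesis by simp
qed

theorem theorem1p2:
  shows "\<exists>\<epsilon>0 > 0. \<exists>C > 0. \<exists>R0. \<forall>r \<delta> :: real. r > 0 \<longrightarrow> \<delta> > 0 \<longrightarrow>
     (let R = r / \<delta>; \<epsilon> = R + 1/2 - real_of_int \<lfloor>R + 1/2\<rfloor> in
      0 \<le> \<epsilon> \<and> \<epsilon> \<le> \<epsilon>0 \<and> R \<ge> R0 \<longrightarrow>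
      (\<forall>N e. unit_norm_tight_frame N e \<longrightarrow>
         MSE \<delta> r N e \<ge> C * \<delta> powr (3/2) / sqrt r))"
proof -
  have bound: "\<forall>r \<delta> :: real. r > 0 \<longrightarrow> \<delta> > 0 \<longrightarrow>
     (let R = r / \<delta>; \<epsilon> = R + 1/2 - real_of_int \<lfloor>R + 1/2\<rfloor> in
      0 \<le> \<epsilon> \<and> \<epsilon> \<le> 1/200 \<and> R \<ge> 100 \<longrightarrow>
      (\<forall>N e. unit_norm_tight_frame N e \<longrightarrow> MSE \<delta> r N e \<ge> 1/4 * \<delta> powr (3/2) / sqrt r))"
    using main_bound by (auto simp: Let_def)
  have "(1/200 :: real) > 0" "(1/4 :: real) > 0" by simp_all
  with bound show ?thesis by blast
qed

end
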